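(* Let $S$ be a $\Gamma$-hemiring, let $\mu$ be a fuzzy right h-ideal of $S$ and let $x \in S$. Then the extension $\langle x,\mu\rangle$ of $\mu$ by $x$ is a fuzzy right h-ideal of $S$.
   Context: A $\Gamma$-hemiring is a pair of additive commutative semigroups with zero $S$ and $\Gamma$ together with a map $S\times\Gamma\times S\to S$, $(a,\alpha,b)\mapsto a\alpha b$, such that for all $a,b,c\in S$ and $\alpha,\beta\in\Gamma$: $(a+b)\alpha c=a\alpha c+b\alpha c$; $a\alpha(b+c)=a\alpha b+a\alpha c$; $a(\alpha+\beta)b=a\alpha b+a\beta b$; $a\alpha(b\beta c)=(a\alpha b)\beta c$; $0\alpha a=0=a\alpha 0$; $a0b=0=b0a$. A fuzzy subset of $S$ is a map $\mu:S\to[0,1]$; it is non-empty if $\mu(x)\neq 0$ for some $x\in S$. A non-empty fuzzy subset $\mu$ is a fuzzy right h-ideal if for all $x,y,a,b,z\in S$ and $\gamma\in\Gamma$: (i) $\mu(x+y)\ge\min\{\mu(x),\mu(y)\}$; (ii) $\mu(x\gamma y)\ge\mu(x)$; (iii) $x+a+z=b+z$ implies $\mu(x)\ge\min\{\mu(a),\mu(b)\}$. For a fuzzy subset $\mu$ of $S$ and $x\in S$, the extension of $\mu$ by $x$ is the fuzzy subset $\langle x,\mu\rangle$ defined by $\langle x,\mu\rangle(y)=\inf_{s\in S,\ \alpha,\gamma\in\Gamma}\mu(x\alpha s\gamma y)$ for $y\in S$. *)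

theory Defs
  imports Complex_Main
begin

text \<open>A Gamma-hemiring: S and Gamma are additive commutative semigroups with zero
  (modelled by the type class comm_monoid_add), together with a ternary map
  m :: S => Gamma => S => S written a alpha b.\<close>

definition gamma_hemiring :: "('s::comm_monoid_add \<Rightarrow> 'g::comm_monoid_add \<Rightarrow> 's \<Rightarrow> 's) \<Rightarrow> bool" where
  "gamma_hemiring m \<longleftrightarrow>
     (\<forall>a b c \<alpha>. m (a + b) \<alpha> c = m a \<alpha> c + m b \<alpha> c) \<and>
     (\<forall>a b c \<alpha>. m a \<alpha> (b + c) = m a \<alpha> b + m a \<alpha> c) \<and>
     (\<forall>a b \<alpha> \<beta>. m a (\<alpha> + \<beta>) b = m a \<alpha> b + m a \<beta> b) \<and>
     (\<forall>a b c \<alpha> \<beta>. m a \<alpha> (m b \<beta> c) = m (m a \<alpha> b) \<beta> c) \<and>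
     (\<forall>a \<alpha>. m 0 \<alpha> a = 0 \<and> m a \<alpha> 0 = 0) \<and>
     (\<forall>a b. m a 0 b = 0 \<and> m b 0 a = 0)"

definition fuzzy_subset :: "('s \<Rightarrow> real) \<Rightarrow> bool" where
  "fuzzy_subset \<mu> \<longleftrightarrow> (\<forall>x. 0 \<le> \<mu> x \<and> \<mu> x \<le> 1)"

definition fuzzy_right_h_ideal ::
  "('s::comm_monoid_add \<Rightarrow> 'g \<Rightarrow> 's \<Rightarrow> 's) \<Rightarrow> ('s \<Rightarrow> real) \<Rightarrow> bool" where
  "fuzzy_right_h_ideal m \<mu> \<longleftrightarrow>
     fuzzy_subset \<mu> \<and> (\<exists>x. \<mu> x \<noteq> 0) \<and>
     (\<forall>x y. \<mu> (x + y) \<ge> min (\<mu> x) (\<mu> y)) \<and>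
     (\<forall>x y \<gamma>. \<mu> (m x \<gamma> y) \<ge> \<mu> x) \<and>
     (\<forall>x a b z. x + a + z = b + z \<longrightarrow> \<mu> x \<ge> min (\<mu> a) (\<mu> b))"

text \<open>Extension of mu by x: <x,mu>(y) = inf over s, alpha, gamma of mu(x alpha s gamma y).
  By associativity the bracketing is immaterial; we use ((x alpha s) gamma y).\<close>
definition fuzzy_extension ::
  "('s \<Rightarrow> 'g \<Rightarrow> 's \<Rightarrow> 's) \<Rightarrow> 's \<Rightarrow> ('s \<Rightarrow> real) \<Rightarrow> 's \<Rightarrow> real" where
  "fuzzy_extension m x \<mu> y = (INF p \<in> (UNIV :: ('s \<times> 'g \<times> 'g) set).
      \<mu> (m (m x (fst (snd p)) (fst p)) (snd (snd p)) y))"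

end

theory Submission
  imports Defs
begin

text \<open>For each fixed t and \<gamma>, the left translate y \<mapsto> \<mu>(t \<gamma> y) inherits the three closure
  properties of \<mu>, because y \<mapsto> t \<gamma> y is additive and commutes with right multiplication.
  The extension \<langle>x,\<mu>\<rangle> is the pointwise infimum of the translates with t = x \<alpha> s, and the
  closure properties, being min-inequalities, pass to pointwise infima. Nonemptiness holds
  because \<mu> attains its maximum at 0 and every translate takes the value \<mu>(0) at 0.\<close>

definition fuzzy_right_h_closed ::
  "('s::comm_monoid_add \<Rightarrow> 'g \<Rightarrow> 's \<Rightarrow> 's) \<Rightarrow> ('s \<Rightarrow> real) \<Rightarrow> bool" where
  "fuzzy_right_h_closed m \<mu> \<longleftrightarrow>
     (\<forall>x y. \<mu> (x + y) \<ge> min (\<mu> x) (\<mu> y)) \<and>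
     (\<forall>x y \<gamma>. \<mu> (m x \<gamma> y) \<ge> \<mu> x) \<and>
     (\<forall>x a b z. x + a + z = b + z \<longrightarrow> \<mu> x \<ge> min (\<mu> a) (\<mu> b))"

lemma fuzzy_right_h_ideal_iff:
  "fuzzy_right_h_ideal m \<mu> \<longleftrightarrow>
     fuzzy_subset \<mu> \<and> (\<exists>x. \<mu> x \<noteq> 0) \<and> fuzzy_right_h_closed m \<mu>"
  unfolding fuzzy_right_h_ideal_def fuzzy_right_h_closed_def by blast

lemma fuzzy_right_h_closedD:
  assumes "fuzzy_right_h_closed m \<mu>"
  shows "\<mu> (x + y) \<ge> min (\<mu> x) (\<mu> y)"
    and "\<mu> (m x \<gamma> y) \<ge> \<mu> x"
    and "x + a + z = b + z \<Longrightarrow> \<mu> x \<ge> min (\<mu> a) (\<mu> b)"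
  using assms unfolding fuzzy_right_h_closed_def by blast+

lemma fuzzy_right_h_closed_left_translate:
  assumes hemiring: "gamma_hemiring m" and closed: "fuzzy_right_h_closed m \<mu>"
  shows "fuzzy_right_h_closed m (\<lambda>y. \<mu> (m t \<gamma> y))"
proof -
  have distrib: "m t \<gamma> (a + b) = m t \<gamma> a + m t \<gamma> b" for a b
    using hemiring unfolding gamma_hemiring_def by blast
  have assoc: "m t \<gamma> (m a \<beta> b) = m (m t \<gamma> a) \<beta> b" for a b \<beta>
    using hemiring unfolding gamma_hemiring_def by blast
  have "\<mu> (m t \<gamma> y) \<ge> min (\<mu> (m t \<gamma> a)) (\<mu> (m t \<gamma> b))" if "y + a + z = b + z" for y a b z
  proof (rule fuzzy_right_h_closedD(3)[OF closed])
    show "m t \<gamma> y + m t \<gamma> a + m t \<gamma> z = m t \<gamma> b + m t \<gamma> z"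
      using arg_cong[OF that, of "m t \<gamma>"] by (simp add: distrib)
  qed
  then show ?thesis
    unfolding fuzzy_right_h_closed_def
    using fuzzy_right_h_closedD(1,2)[OF closed] by (simp add: distrib assoc)
qed

lemma fuzzy_right_h_closed_INF:
  assumes closed: "\<And>i. fuzzy_right_h_closed m (f i)"
    and bdd: "\<And>y. bdd_below (range (\<lambda>i. f i y))"
  shows "fuzzy_right_h_closed m (\<lambda>y. INF i. f i y)"
proof -
  let ?F = "\<lambda>y. INF i. f i y"
  have lower: "?F y \<le> f i y" for y i
    by (rule cINF_lower[OF bdd]) simp
  have min_lower: "min (?F a) (?F b) \<le> min (f i a) (f i b)" for a b i
    using lower[of a i] lower[of b i] by linarith
  have "min (?F x) (?F y) \<le> ?F (x + y)" for x y
    by (rule cINF_greatest) (auto intro: order_trans[OF min_lower fuzzy_right_h_closedD(1)[OF closed]])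
  moreover have "?F x \<le> ?F (m x \<gamma> y)" for x y \<gamma>
    by (rule cINF_greatest) (auto intro: order_trans[OF lower fuzzy_right_h_closedD(2)[OF closed]])
  moreover have "min (?F a) (?F b) \<le> ?F x" if "x + a + z = b + z" for x a b z
    by (rule cINF_greatest)
      (auto intro: order_trans[OF min_lower fuzzy_right_h_closedD(3)[OF closed that]])
  ultimately show ?thesis
    unfolding fuzzy_right_h_closed_def by blast
qed

lemma fuzzy_subset_INF:
  assumes "\<And>i. fuzzy_subset (f i)"
  shows "fuzzy_subset (\<lambda>y. INF i. f i y)"
  unfolding fuzzy_subset_def
proof
  fix y
  have bounds: "0 \<le> f i y" "f i y \<le> 1" for i
    using assms unfolding fuzzy_subset_def by blast+
  have "0 \<le> (INF i. f i y)"
    by (rule cINF_greatest) (auto simp: bounds)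
  moreover have "(INF i. f i y) \<le> f undefined y"
    by (rule cINF_lower) (auto intro: bdd_belowI[of _ 0] simp: bounds)
  ultimately show "0 \<le> (INF i. f i y) \<and> (INF i. f i y) \<le> 1"
    using bounds by (meson order_trans)
qed

lemma fuzzy_right_h_closed_le_zero:
  assumes "gamma_hemiring m" and "fuzzy_right_h_closed m \<mu>"
  shows "\<mu> y \<le> \<mu> 0"
proof -
  have "m y \<gamma> 0 = 0" for \<gamma>
    using assms(1) unfolding gamma_hemiring_def by blast
  then show ?thesis
    using fuzzy_right_h_closedD(2)[OF assms(2), of y] by metis
qed

lemma fuzzy_extension_zero:
  assumes "gamma_hemiring m"
  shows "fuzzy_extension m x \<mu> 0 = \<mu> 0"
proof -
  have "m t \<gamma> 0 = 0" for t \<gamma>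
    using assms unfolding gamma_hemiring_def by blast
  then show ?thesis
    unfolding fuzzy_extension_def by simp
qed

theorem theorem3p2:
  fixes m :: "'s::comm_monoid_add \<Rightarrow> 'g::comm_monoid_add \<Rightarrow> 's \<Rightarrow> 's"
    and \<mu> :: "'s \<Rightarrow> real" and x :: 's
  assumes "gamma_hemiring m"
    and "fuzzy_right_h_ideal m \<mu>"
  shows "fuzzy_right_h_ideal m (fuzzy_extension m x \<mu>)"
proof -
  define translate :: "'s \<times> 'g \<times> 'g \<Rightarrow> 's \<Rightarrow> real"
    where "translate p y = \<mu> (m (m x (fst (snd p)) (fst p)) (snd (snd p)) y)" for p y
  have extension: "fuzzy_extension m x \<mu> = (\<lambda>y. INF p. translate p y)"
    unfolding fuzzy_extension_def translate_def by simp
  obtain y0 where subset: "fuzzy_subset \<mu>" and "\<mu> y0 \<noteq> 0"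
    and closed: "fuzzy_right_h_closed m \<mu>"
    using assms(2) unfolding fuzzy_right_h_ideal_iff by blast
  moreover have "0 \<le> \<mu> y0"
    using subset unfolding fuzzy_subset_def by blast
  ultimately have nonzero: "fuzzy_extension m x \<mu> 0 \<noteq> 0"
    using fuzzy_right_h_closed_le_zero[OF assms(1) closed, of y0]
    unfolding fuzzy_extension_zero[OF assms(1)] by linarith
  have "fuzzy_subset (translate p)" for p
    using subset unfolding fuzzy_subset_def translate_def by blast
  then have "fuzzy_subset (fuzzy_extension m x \<mu>)"
    unfolding extension by (rule fuzzy_subset_INF)
  moreover have "fuzzy_right_h_closed m (fuzzy_extension m x \<mu>)"
    unfolding extension
  proof (rule fuzzy_right_h_closed_INF)
    show "fuzzy_right_h_closed m (translate p)" for p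
      unfolding translate_def by (rule fuzzy_right_h_closed_left_translate[OF assms(1) closed])
    show "bdd_below (range (\<lambda>p. translate p y))" for y
      using subset unfolding fuzzy_subset_def translate_def by (intro bdd_belowI[of _ 0]) auto
  qed
  ultimately show ?thesis
    using nonzero unfolding fuzzy_right_h_ideal_iff by blast
qed

end
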